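(* Let $F_c$ be a CABA framework. For every set $C$ of constraints, set $A$ of assumptions, set $R$ of rules and atom $p(\mathsf t)$: $C\cup A\vdash_R p(\mathsf t)\in\mathit{TCArg}$ if and only if there exists $C'\cup A'\vdash_R p(\mathsf X)\in\mathit{MGCArg}$ such that, for $\vartheta=\{\mathsf X/\mathsf t\}$, we have $C=C'\vartheta$, $A=A'\vartheta$, and $C'\vartheta$ is consistent.
   Context: Conventions. $\mathsf X$ denotes a tuple of variables and $\mathsf t$ a tuple of terms. A substitution $\vartheta=\{X_1/t_1,\dots,X_n/t_n\}$ maps distinct variables to terms; $e\vartheta$ replaces each occurrence of $X_i$ in $e$ by $t_i$; $\{\mathsf X/\mathsf t\}$ maps $\mathsf X$ componentwise to $\mathsf t$. Theory of constraints. $\mathcal{CT}$ is a first-order theory with equality whose atomic formulas form the set $\mathcal C$ of constraints; a finite set $\{c_1,\dots,c_n\}\subseteq\mathcal C$ is consistent if $\mathcal{CT}\models\exists(c_1\wedge\dots\wedge c_n)$. CABA framework $F_c=\langle\mathcal L_c,\mathcal C,\mathcal R,\mathcal{CT},\mathcal A,\overline{\cdot}\rangle$: $\mathcal L_c$ a set of atoms; $\mathcal C\subseteq\mathcal L_c$ the constraints of $\mathcal{CT}$; $\mathcal R$ a set of rules $s_0\leftarrow s_1,\dots,s_m$ ($s_0\in\mathcal L_c\setminus\mathcal C$, $s_i\in\mathcal L_c$), written in normalised form $p(\mathsf X_0)\leftarrow C,p_1(\mathsf X_1),\dots,p_m(\mathsf X_m)$ with $C\subseteq\mathcal C$ and each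 $\mathsf X_i$ a tuple of distinct variables; $\mathcal A\subseteq\mathcal L_c\setminus\mathcal C$ a nonempty set of assumptions that are not heads of rules; $\overline\cdot:\mathcal A\to\mathcal L_c\setminus\mathcal C$ a total contrary map with $\overline{p(\mathsf t)}=cp(\mathsf t)$ for a fixed predicate $cp$ per assumption predicate $p$; $\mathcal L_c,\mathcal C,\mathcal A$ predicate closed. Tight constrained argument. For consistent $C\subseteq\mathcal C$, $A\subseteq\mathcal A$, $R\subseteq\mathcal R$, a tight constrained argument for claim $s\in\mathcal L_c\setminus\mathcal C$ supported by $C\cup A$ and $R$, written $C\cup A\vdash_R s$, is a finite tree with root $s$ in which every non-leaf node $p(\mathsf t)$ has as children exactly the atoms $s_1\vartheta,\dots,s_m\vartheta$ for exactly one renamed-apart (fresh-variable) copy $p(\mathsf X)\leftarrow s_1,\dots,s_m$ of a rule in $R$, with $\vartheta=\{\mathsf X/\mathsf t\}$ (or the single child true if the rule is a fact), and every leaf is a constraint in $C$, an assumption in $A$, or true; $C$ and $A$ are exactly the constraints and assumptions occurring in the tree and $R$ the rules used. A most general constrained argument is a tight constrained argument whose claim has the form $p(\mathsf X)$ with $\mathsf X$ a tuple of variables. $\mathit{TCArg}$ and $\mathit{MGCArg}$ denote the sets of tight and of most general constrained arguments of $F_c$.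
   Formalization: The most general argument $C'\cup A'\vdash_R p(\mathsf X)$ in the equivalence also has all its variables other than those of $\mathsf X$ absent from $\mathsf t$, so it is standardised apart from $\mathsf t$. The statement above fails without it. *)

theory Defs
  imports Main
begin

datatype ('f, 'v) trm = Var 'v | Fn 'f "('f, 'v) trm list"

datatype ('p, 'f, 'v) atm = Atm 'p "('f, 'v) trm list"

fun subst_trm :: "('v \<Rightarrow> ('f, 'v) trm) \<Rightarrow> ('f, 'v) trm \<Rightarrow> ('f, 'v) trm" where
  "subst_trm s (Var x) = s x"
| "subst_trm s (Fn f ts) = Fn f (map (subst_trm s) ts)"

fun vars_trm :: "('f, 'v) trm \<Rightarrow> 'v set" where
  "vars_trm (Var x) = {x}"
| "vars_trm (Fn f ts) = \<Union> (set (map vars_trm ts))"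

fun subst_atm :: "('v \<Rightarrow> ('f, 'v) trm) \<Rightarrow> ('p, 'f, 'v) atm \<Rightarrow> ('p, 'f, 'v) atm" where
  "subst_atm s (Atm p ts) = Atm p (map (subst_trm s) ts)"

fun vars_atm :: "('p, 'f, 'v) atm \<Rightarrow> 'v set" where
  "vars_atm (Atm p ts) = \<Union> (set (map vars_trm ts))"

definition mk_subst :: "'v list \<Rightarrow> ('f, 'v) trm list \<Rightarrow> 'v \<Rightarrow> ('f, 'v) trm" where
  "mk_subst Xs ts = (\<lambda>x. case map_of (zip Xs ts) x of Some t \<Rightarrow> t | None \<Rightarrow> Var x)"

datatype ('p, 'f, 'v) rule = Rule (head: "('p, 'f, 'v) atm") (body: "('p, 'f, 'v) atm list")

definition rename_rule :: "('v \<Rightarrow> 'v) \<Rightarrow> ('p, 'f, 'v) rule \<Rightarrow> ('p, 'f, 'v) rule" where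
  "rename_rule \<sigma> r = Rule (subst_atm (Var \<circ> \<sigma>) (head r)) (map (subst_atm (Var \<circ> \<sigma>)) (body r))"

definition rule_vars :: "('p, 'f, 'v) rule \<Rightarrow> 'v set" where
  "rule_vars r = vars_atm (head r) \<union> \<Union> (set (map vars_atm (body r)))"

type_synonym ('d, 'f, 'p) struct = "('f \<Rightarrow> 'd list \<Rightarrow> 'd) \<times> ('p \<Rightarrow> 'd list \<Rightarrow> bool)"

fun eval_trm :: "('d, 'f, 'p) struct \<Rightarrow> ('v \<Rightarrow> 'd) \<Rightarrow> ('f, 'v) trm \<Rightarrow> 'd" where
  "eval_trm M v (Var x) = v x"
| "eval_trm M v (Fn f ts) = fst M f (map (eval_trm M v) ts)"

fun holds_atm :: "('d, 'f, 'p) struct \<Rightarrow> ('v \<Rightarrow> 'd) \<Rightarrow> ('p, 'f, 'v) atm \<Rightarrow> bool" where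
  "holds_atm M v (Atm p ts) = snd M p (map (eval_trm M v) ts)"

text \<open>CT |= exists (c1 /\ ... /\ cn), where CT is given by its class of models.\<close>
definition consistent :: "('d, 'f, 'p) struct set \<Rightarrow> ('p, 'f, 'v) atm set \<Rightarrow> bool" where
  "consistent CT S \<longleftrightarrow> finite S \<and> (\<forall>M\<in>CT. \<exists>v. \<forall>c\<in>S. holds_atm M v c)"

definition pred_closed :: "('p, 'f, 'v) atm set \<Rightarrow> bool" where
  "pred_closed S \<longleftrightarrow> (\<forall>p ts ts'. Atm p ts \<in> S \<longrightarrow> length ts' = length ts \<longrightarrow> Atm p ts' \<in> S)"

definition normalised_rule :: "('p, 'f, 'v) atm set \<Rightarrow> ('p, 'f, 'v) rule \<Rightarrow> bool" where
  "normalised_rule Cc r \<longleftrightarrow>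
     (\<exists>p Xs. head r = Atm p (map Var Xs) \<and> distinct Xs) \<and>
     (\<forall>b\<in>set (body r). b \<notin> Cc \<longrightarrow> (\<exists>q Ys. b = Atm q (map Var Ys) \<and> distinct Ys))"

text \<open>Lc: language; Cc: constraints; Rf: rules; CT: models of the theory of constraints;
  Af: assumptions; ctr: contrary map; eqp: the equality predicate of CT.\<close>
definition caba_framework ::
  "('p, 'f, 'v) atm set \<Rightarrow> ('p, 'f, 'v) atm set \<Rightarrow> ('p, 'f, 'v) rule set \<Rightarrow>
   ('d, 'f, 'p) struct set \<Rightarrow> ('p, 'f, 'v) atm set \<Rightarrow> (('p, 'f, 'v) atm \<Rightarrow> ('p, 'f, 'v) atm) \<Rightarrow> 'p \<Rightarrow> bool" where
  "caba_framework Lc Cc Rf CT Af ctr eqp \<longleftrightarrow>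
     infinite (UNIV :: 'v set) \<and>
     Cc \<subseteq> Lc \<and>
     (\<forall>x y. Atm eqp [x, y] \<in> Cc) \<and>
     (\<forall>M\<in>CT. \<forall>ds. snd M eqp ds \<longleftrightarrow> (\<exists>a b. ds = [a, b] \<and> a = b)) \<and>
     (\<forall>r\<in>Rf. head r \<in> Lc - Cc \<and> set (body r) \<subseteq> Lc \<and> normalised_rule Cc r) \<and>
     Af \<subseteq> Lc - Cc \<and> Af \<noteq> {} \<and>
     (\<forall>r\<in>Rf. head r \<notin> Af) \<and>
     (\<forall>a\<in>Af. ctr a \<in> Lc - Cc) \<and>
     (\<exists>cp. \<forall>p ts. Atm p ts \<in> Af \<longrightarrow> ctr (Atm p ts) = Atm (cp p) ts) \<and>
     pred_closed Lc \<and> pred_closed Cc \<and> pred_closed Af"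

text \<open>Leaves are atoms (constraints/assumptions) or true; an inner node records its label,
  the rule of the framework used and the variable renaming giving the renamed-apart copy.\<close>
datatype ('p, 'f, 'v) ctree =
    CLeaf "('p, 'f, 'v) atm"
  | TLeaf
  | CNode "('p, 'f, 'v) atm" "('p, 'f, 'v) rule" "'v \<Rightarrow> 'v" "('p, 'f, 'v) ctree list"

fun label :: "('p, 'f, 'v) ctree \<Rightarrow> ('p, 'f, 'v) atm option" where
  "label (CLeaf a) = Some a"
| "label TLeaf = None"
| "label (CNode a r \<sigma> ts) = Some a"

definition node_ok :: "('p, 'f, 'v) atm \<Rightarrow> ('p, 'f, 'v) rule \<Rightarrow> ('p, 'f, 'v) ctree list \<Rightarrow> bool" where
  "node_ok a r' ts \<longleftrightarrow>
     (\<exists>p Xs targs. head r' = Atm p (map Var Xs) \<and> a = Atm p targs \<and> length Xs = length targs \<and>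
        (if body r' = [] then ts = [TLeaf]
         else map label ts = map (\<lambda>s. Some (subst_atm (mk_subst Xs targs) s)) (body r')))"

fun wf_tree :: "('p, 'f, 'v) atm set \<Rightarrow> ('p, 'f, 'v) atm set \<Rightarrow> ('p, 'f, 'v) rule set \<Rightarrow>
    ('p, 'f, 'v) ctree \<Rightarrow> bool" where
  "wf_tree Cc Af Rf (CLeaf a) \<longleftrightarrow> a \<in> Cc \<or> a \<in> Af"
| "wf_tree Cc Af Rf TLeaf \<longleftrightarrow> True"
| "wf_tree Cc Af Rf (CNode a r \<sigma> ts) \<longleftrightarrow>
     r \<in> Rf \<and> inj_on \<sigma> (rule_vars r) \<and> node_ok a (rename_rule \<sigma> r) ts \<and>
     (\<forall>t\<in>set ts. wf_tree Cc Af Rf t)"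

fun fresh_vars :: "('p, 'f, 'v) ctree \<Rightarrow> 'v set list" where
  "fresh_vars (CLeaf a) = []"
| "fresh_vars TLeaf = []"
| "fresh_vars (CNode a r \<sigma> ts) =
     (\<Union> (set (map vars_atm (body (rename_rule \<sigma> r)))) - vars_atm (head (rename_rule \<sigma> r)))
     # concat (map fresh_vars ts)"

definition renamed_apart :: "('p, 'f, 'v) atm \<Rightarrow> ('p, 'f, 'v) ctree \<Rightarrow> bool" where
  "renamed_apart s T \<longleftrightarrow>
     (let L = fresh_vars T in
       (\<forall>i<length L. L ! i \<inter> vars_atm s = {}) \<and>
       (\<forall>i<length L. \<forall>j<length L. i \<noteq> j \<longrightarrow> L ! i \<inter> L ! j = {}))"

fun leaves :: "('p, 'f, 'v) ctree \<Rightarrow> ('p, 'f, 'v) atm set" where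
  "leaves (CLeaf a) = {a}"
| "leaves TLeaf = {}"
| "leaves (CNode a r \<sigma> ts) = \<Union> (set (map leaves ts))"

fun rules_used :: "('p, 'f, 'v) ctree \<Rightarrow> ('p, 'f, 'v) rule set" where
  "rules_used (CLeaf a) = {}"
| "rules_used TLeaf = {}"
| "rules_used (CNode a r \<sigma> ts) = insert r (\<Union> (set (map rules_used ts)))"

definition tight_arg ::
  "('p, 'f, 'v) atm set \<Rightarrow> ('p, 'f, 'v) atm set \<Rightarrow> ('p, 'f, 'v) rule set \<Rightarrow>
   ('d, 'f, 'p) struct set \<Rightarrow> ('p, 'f, 'v) atm set \<Rightarrow>
   ('p, 'f, 'v) atm set \<Rightarrow> ('p, 'f, 'v) atm set \<Rightarrow> ('p, 'f, 'v) rule set \<Rightarrow> ('p, 'f, 'v) atm \<Rightarrow> bool" where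
  "tight_arg Lc Cc Rf CT Af C A R s \<longleftrightarrow>
     s \<in> Lc - Cc \<and> C \<subseteq> Cc \<and> A \<subseteq> Af \<and> R \<subseteq> Rf \<and> consistent CT C \<and>
     (\<exists>T. wf_tree Cc Af Rf T \<and> label T = Some s \<and> renamed_apart s T \<and>
          C = leaves T \<inter> Cc \<and> A = leaves T \<inter> Af \<and> R = rules_used T)"

definition mg_arg ::
  "('p, 'f, 'v) atm set \<Rightarrow> ('p, 'f, 'v) atm set \<Rightarrow> ('p, 'f, 'v) rule set \<Rightarrow>
   ('d, 'f, 'p) struct set \<Rightarrow> ('p, 'f, 'v) atm set \<Rightarrow>
   ('p, 'f, 'v) atm set \<Rightarrow> ('p, 'f, 'v) atm set \<Rightarrow> ('p, 'f, 'v) rule set \<Rightarrow> ('p, 'f, 'v) atm \<Rightarrow> bool" where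
  "mg_arg Lc Cc Rf CT Af C A R s \<longleftrightarrow>
     tight_arg Lc Cc Rf CT Af C A R s \<and> (\<exists>p Xs. distinct Xs \<and> s = Atm p (map Var Xs))"

end

theory Submission
  imports Defs
begin

(* An argument tree for p(t) is the theta-instance, theta = {X/t}, of a tree for p(X) with X
   fresh: since theta moves none of the variables introduced by the rule copies, each child label
   is the theta-instance of the child label computed from the generalised parent.  Conversely,
   applying theta to a most general tree for p(X) gives a tree for p(t) once the variables
   introduced by its rule copies are renamed away from those of t; this renaming does not touch
   the constraints and assumptions, whose non-claim variables avoid t by hypothesis.  Predicate
   closedness makes the classification of atoms invariant under substitution, and a model of
   C' theta yields one of C'. *)

section \<open>Substitutions and renamings\<close>

lemma subst_trm_subst_trm: "subst_trm f (subst_trm g t) = subst_trm (\<lambda>x. subst_trm f (g x)) t"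
  by (induction t) auto

lemma subst_atm_subst_atm: "subst_atm f (subst_atm g a) = subst_atm (\<lambda>x. subst_trm f (g x)) a"
  by (cases a) (auto simp: subst_trm_subst_trm)

lemma subst_trm_cong: "(\<And>x. x \<in> vars_trm t \<Longrightarrow> f x = g x) \<Longrightarrow> subst_trm f t = subst_trm g t"
  by (induction t) auto

lemma subst_atm_cong: "(\<And>x. x \<in> vars_atm a \<Longrightarrow> f x = g x) \<Longrightarrow> subst_atm f a = subst_atm g a"
  by (cases a) (auto intro: subst_trm_cong)

lemma vars_subst_trm: "vars_trm (subst_trm f t) = \<Union> (vars_trm ` f ` vars_trm t)"
  by (induction t) auto

lemma vars_subst_atm: "vars_atm (subst_atm f a) = \<Union> (vars_trm ` f ` vars_atm a)"
  by (cases a) (auto simp: vars_subst_trm)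

lemma subst_trm_Var [simp]: "subst_trm Var t = t"
  by (induction t) (auto simp: map_idI)

lemma subst_atm_Var [simp]: "subst_atm Var a = a"
  by (cases a) (auto simp: map_idI)

lemma eval_trm_subst_trm: "eval_trm M v (subst_trm f t) = eval_trm M (\<lambda>x. eval_trm M v (f x)) t"
  by (induction t) (auto simp: comp_def cong: map_cong)

lemma holds_atm_subst_atm: "holds_atm M v (subst_atm f a) = holds_atm M (\<lambda>x. eval_trm M v (f x)) a"
  by (cases a) (auto simp: eval_trm_subst_trm comp_def)

lemma finite_vars_trm [simp]: "finite (vars_trm t)"
  by (induction t) auto

lemma finite_vars_atm [simp]: "finite (vars_atm a)"
  by (cases a) auto

lemma vars_rename_atm: "vars_atm (subst_atm (Var \<circ> \<rho>) a) = \<rho> ` vars_atm a"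
  by (auto simp: vars_subst_atm)

lemma mk_subst_notin: "y \<notin> set Xs \<Longrightarrow> mk_subst Xs ts y = Var y"
  unfolding mk_subst_def by (auto split: option.split dest: map_of_SomeD in_set_zipE)

lemma subst_atm_mk_subst_Vars:
  "distinct Xs \<Longrightarrow> length Xs = length ts \<Longrightarrow> subst_atm (mk_subst Xs ts) (Atm p (map Var Xs)) = Atm p ts"
  unfolding mk_subst_def by (auto intro!: nth_equalityI simp: map_of_zip_nth)

lemma vars_subst_atm_mk_subst:
  assumes "length Zs = length us"
  shows "vars_atm (subst_atm (mk_subst Zs us) s) \<subseteq> \<Union> (set (map vars_trm us)) \<union> (vars_atm s - set Zs)"
proof
  fix z assume "z \<in> vars_atm (subst_atm (mk_subst Zs us) s)"
  then obtain x where x: "x \<in> vars_atm s" "z \<in> vars_trm (mk_subst Zs us x)"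
    by (auto simp: vars_subst_atm)
  show "z \<in> \<Union> (set (map vars_trm us)) \<union> (vars_atm s - set Zs)"
  proof (cases "x \<in> set Zs")
    case True
    then obtain t where "map_of (zip Zs us) x = Some t" using assms by (metis map_of_zip_is_None not_Some_eq)
    moreover from this have "t \<in> set us" by (auto dest: map_of_SomeD in_set_zipE)
    ultimately show ?thesis using x by (auto simp: mk_subst_def)
  next
    case False
    then show ?thesis using x by (simp add: mk_subst_notin)
  qed
qed

lemma map_of_zip_map_inj_on:
  "length Zs = length us \<Longrightarrow> inj_on \<rho> (insert y (set Zs)) \<Longrightarrow>
   map_of (zip (map \<rho> Zs) (map g us)) (\<rho> y) = map_option g (map_of (zip Zs us) y)"
proof (induction Zs us rule: list_induct2)
  case (Cons z Zs u us)
  have "inj_on \<rho> (insert y (set Zs))" using Cons.prems by (auto intro: inj_on_subset)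
  then show ?case using Cons by (auto dest: inj_onD)
qed simp

lemma subst_atm_mk_subst_rename:
  assumes "inj_on \<rho> (set Zs \<union> vars_atm s)" "length Zs = length us"
    and "\<forall>y\<in>vars_atm s - set Zs. \<theta> (\<rho> y) = Var (\<rho> y)"
  shows "subst_atm (mk_subst (map \<rho> Zs) (map (subst_trm (\<lambda>x. \<theta> (\<rho> x))) us)) (subst_atm (Var \<circ> \<rho>) s)
       = subst_atm (\<lambda>x. \<theta> (\<rho> x)) (subst_atm (mk_subst Zs us) s)"
  unfolding subst_atm_subst_atm
proof (rule subst_atm_cong)
  fix y assume y: "y \<in> vars_atm s"
  have "inj_on \<rho> (insert y (set Zs))" by (rule inj_on_subset[OF assms(1)]) (use y in auto)
  from map_of_zip_map_inj_on[OF assms(2) this]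
  have m: "map_of (zip (map \<rho> Zs) (map (subst_trm (\<lambda>x. \<theta> (\<rho> x))) us)) (\<rho> y)
      = map_option (subst_trm (\<lambda>x. \<theta> (\<rho> x))) (map_of (zip Zs us) y)" .
  show "subst_trm (mk_subst (map \<rho> Zs) (map (subst_trm (\<lambda>x. \<theta> (\<rho> x))) us)) ((Var \<circ> \<rho>) y) =
        subst_trm (\<lambda>x. \<theta> (\<rho> x)) (mk_subst Zs us y)"
  proof (cases "map_of (zip Zs us) y")
    case None
    with assms(2) have "y \<notin> set Zs" by simp
    with None m assms(3) y show ?thesis by (simp add: mk_subst_def)
  qed (use m in \<open>simp add: mk_subst_def\<close>)
qed

lemma subst_atm_mk_subst_commute:
  assumes "length Zs = length us" "\<forall>y\<in>vars_atm s - set Zs. \<theta> y = Var y"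
  shows "subst_atm (mk_subst Zs (map (subst_trm \<theta>) us)) s = subst_atm \<theta> (subst_atm (mk_subst Zs us) s)"
  using subst_atm_mk_subst_rename[of id Zs s us \<theta>] assms by simp

lemma head_rename_rule: "head (rename_rule \<sigma> r) = subst_atm (Var \<circ> \<sigma>) (head r)"
  and body_rename_rule: "body (rename_rule \<sigma> r) = map (subst_atm (Var \<circ> \<sigma>)) (body r)"
  by (simp_all add: rename_rule_def)

lemma rename_rule_comp: "rename_rule (\<rho> \<circ> \<sigma>) r = rename_rule \<rho> (rename_rule \<sigma> r)"
  by (simp add: rename_rule_def subst_atm_subst_atm comp_def)

lemma rule_vars_rename_rule: "rule_vars (rename_rule \<sigma> r) = \<sigma> ` rule_vars r"
  by (auto simp: rule_vars_def vars_rename_atm head_rename_rule body_rename_rule)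

lemma finite_rule_vars [simp]: "finite (rule_vars r)"
  by (simp add: rule_vars_def)

lemma subst_atm_in_pred_closed_iff:
  "pred_closed S \<Longrightarrow> subst_atm f a \<in> S \<longleftrightarrow> a \<in> S"
  unfolding pred_closed_def by (cases a) (simp, metis length_map)

lemma image_subst_atm_Int_pred_closed:
  "pred_closed S \<Longrightarrow> subst_atm f ` L \<inter> S = subst_atm f ` (L \<inter> S)"
  by (auto simp: subst_atm_in_pred_closed_iff)

lemma consistent_subst_atm_imageD:
  assumes "consistent CT (subst_atm f ` S)" "finite S"
  shows "consistent CT S"
  using assms unfolding consistent_def by (fastforce simp: holds_atm_subst_atm)

lemma ex_distinct_list_disjoint:
  assumes "infinite (UNIV :: 'v set)" "finite (W :: 'v set)"
  shows "\<exists>Xs. distinct Xs \<and> length Xs = n \<and> set Xs \<inter> W = {}"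
proof -
  have "infinite (UNIV - W)" using assms by (simp add: Diff_infinite_finite)
  then obtain B where B: "finite B" "card B = n" "B \<subseteq> UNIV - W"
    using infinite_arbitrarily_large by blast
  obtain Xs where "set Xs = B" "distinct Xs" using finite_distinct_list[OF B(1)] by blast
  then show ?thesis using B distinct_card by (intro exI[of _ Xs]) fastforce
qed

lemma obtain_renaming_away:
  assumes "infinite (UNIV :: 'v set)" "finite W" "S \<subseteq> W"
  obtains \<rho> :: "'v \<Rightarrow> 'v" where "inj_on \<rho> W" "\<And>x. x \<notin> S \<Longrightarrow> \<rho> x = x" "\<rho> ` S \<inter> W = {}"
proof -
  have "finite S" using assms(2,3) by (rule finite_subset[rotated])
  obtain Xs where Xs: "distinct Xs" "length Xs = card S" "set Xs \<inter> W = {}"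
    using ex_distinct_list_disjoint[OF assms(1,2)] by blast
  then have "card S \<le> card (set Xs)" by (simp add: distinct_card)
  with card_le_inj[OF \<open>finite S\<close> finite_set] obtain f where f: "f ` S \<subseteq> set Xs" "inj_on f S"
    by blast
  define \<rho> where "\<rho> x = (if x \<in> S then f x else x)" for x
  have id_out: "\<rho> x = x" if "x \<notin> S" for x using that by (simp add: \<rho>_def)
  have "\<rho> ` S = f ` S" by (simp add: \<rho>_def)
  with f(1) Xs(3) have away: "\<rho> ` S \<inter> W = {}" by blast
  have "\<rho> ` (W - S) = W - S" using id_out by simp
  with away have "\<rho> ` (S - (W - S)) \<inter> \<rho> ` (W - S - S) = {}" by blast
  moreover have "inj_on \<rho> S" using f(2) by (simp add: \<rho>_def inj_on_def)
  moreover have "inj_on \<rho> (W - S)" using id_out by (simp add: inj_on_def)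
  ultimately have "inj_on \<rho> (S \<union> (W - S))" unfolding inj_on_Un by blast
  with assms(3) have "inj_on \<rho> W" by (simp add: Un_absorb1)
  from that[OF this id_out away] show ?thesis .
qed

section \<open>Argument trees\<close>

fun tvars :: "('p, 'f, 'v) ctree \<Rightarrow> 'v set" where
  "tvars (CLeaf a) = vars_atm a"
| "tvars TLeaf = {}"
| "tvars (CNode a r \<sigma> ts) = vars_atm a \<union> rule_vars (rename_rule \<sigma> r) \<union> \<Union> (set (map tvars ts))"

lemma finite_tvars [simp]: "finite (tvars T)"
  by (induction T) auto

lemma vars_label_subset_tvars: "label T = Some a \<Longrightarrow> vars_atm a \<subseteq> tvars T"
  by (cases T) auto

lemma finite_leaves [simp]: "finite (leaves T)"
  by (induction T) auto

lemma fresh_vars_subset_tvars: "F \<in> set (fresh_vars T) \<Longrightarrow> F \<subseteq> tvars T"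
  by (induction T arbitrary: F) (fastforce simp: rule_vars_def)+

lemma leaves_subset_if_wf_tree: "wf_tree Cc Af Rf T \<Longrightarrow> leaves T \<subseteq> Cc \<union> Af"
  by (induction T) auto

lemma rules_used_subset_if_wf_tree: "wf_tree Cc Af Rf T \<Longrightarrow> rules_used T \<subseteq> Rf"
  by (induction T) auto

lemma vars_leaves_subset:
  assumes "wf_tree Cc Af Rf T" "label T = Some a" "l \<in> leaves T"
  shows "vars_atm l \<subseteq> vars_atm a \<union> \<Union> (set (fresh_vars T))"
  using assms
proof (induction T arbitrary: a)
  case (CNode a0 r \<sigma> ts)
  define r' where "r' = rename_rule \<sigma> r"
  define FV where "FV = \<Union> (set (map vars_atm (body r'))) - vars_atm (head r')"
  have fresh: "fresh_vars (CNode a0 r \<sigma> ts) = FV # concat (map fresh_vars ts)"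
    by (simp add: FV_def r'_def)
  from CNode.prems obtain q Zs targs where h: "head r' = Atm q (map Var Zs)" "a = Atm q targs"
    "length Zs = length targs"
    and c: "if body r' = [] then ts = [TLeaf]
            else map label ts = map (\<lambda>s. Some (subst_atm (mk_subst Zs targs) s)) (body r')"
    by (auto simp: node_ok_def r'_def)
  from CNode.prems obtain i where i: "i < length ts" "l \<in> leaves (ts ! i)"
    by (auto simp: in_set_conv_nth)
  with c have nonempty: "body r' \<noteq> []" by auto
  with c have "length (body r') = length ts" by (metis length_map)
  with c nonempty i have lab: "label (ts ! i) = Some (subst_atm (mk_subst Zs targs) (body r' ! i))"
    by (metis (no_types, lifting) nth_map)
  have "vars_atm l \<subseteq> vars_atm (subst_atm (mk_subst Zs targs) (body r' ! i)) \<union> \<Union> (set (fresh_vars (ts ! i)))"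
    using CNode i lab by (meson nth_mem wf_tree.simps(3))
  moreover have "vars_atm (subst_atm (mk_subst Zs targs) (body r' ! i)) \<subseteq> vars_atm a \<union> FV"
    using vars_subst_atm_mk_subst[OF h(3), of "body r' ! i"] h i \<open>length (body r') = length ts\<close>
    by (fastforce simp: FV_def)
  moreover have "set (fresh_vars (ts ! i)) \<subseteq> set (concat (map fresh_vars ts))"
    using i nth_mem by fastforce
  ultimately show ?case unfolding fresh by fastforce
qed auto

fun subst_ctree :: "('v \<Rightarrow> 'v) \<Rightarrow> ('v \<Rightarrow> ('f, 'v) trm) \<Rightarrow> ('p, 'f, 'v) ctree \<Rightarrow> ('p, 'f, 'v) ctree" where
  "subst_ctree \<rho> \<theta> (CLeaf a) = CLeaf (subst_atm (\<lambda>x. \<theta> (\<rho> x)) a)"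
| "subst_ctree \<rho> \<theta> TLeaf = TLeaf"
| "subst_ctree \<rho> \<theta> (CNode a r \<sigma> ts) =
     CNode (subst_atm (\<lambda>x. \<theta> (\<rho> x)) a) r (\<rho> \<circ> \<sigma>) (map (subst_ctree \<rho> \<theta>) ts)"

lemma label_subst_ctree: "label (subst_ctree \<rho> \<theta> T) = map_option (subst_atm (\<lambda>x. \<theta> (\<rho> x))) (label T)"
  by (cases T) auto

lemma leaves_subst_ctree: "leaves (subst_ctree \<rho> \<theta> T) = subst_atm (\<lambda>x. \<theta> (\<rho> x)) ` leaves T"
  by (induction T) (auto simp: image_Union)

lemma rules_used_subst_ctree: "rules_used (subst_ctree \<rho> \<theta> T) = rules_used T"
  by (induction T) auto

lemma fresh_vars_subst_ctree:
  "inj_on \<rho> (tvars T) \<Longrightarrow> fresh_vars (subst_ctree \<rho> \<theta> T) = map ((`) \<rho>) (fresh_vars T)"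
proof (induction T)
  case (CNode a r \<sigma> ts)
  let ?r = "rename_rule \<sigma> r"
  have "inj_on \<rho> (rule_vars ?r)" using CNode.prems by (auto intro: inj_on_subset)
  then have "\<rho> ` \<Union> (set (map vars_atm (body ?r))) - \<rho> ` vars_atm (head ?r)
      = \<rho> ` (\<Union> (set (map vars_atm (body ?r))) - vars_atm (head ?r))"
    by (intro inj_on_image_set_diff[symmetric]) (auto simp: rule_vars_def)
  then have "\<Union> (set (map vars_atm (body (rename_rule (\<rho> \<circ> \<sigma>) r)))) - vars_atm (head (rename_rule (\<rho> \<circ> \<sigma>) r))
      = \<rho> ` (\<Union> (set (map vars_atm (body ?r))) - vars_atm (head ?r))"
    unfolding rename_rule_comp head_rename_rule[of \<rho>] body_rename_rule[of \<rho>]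
    by (simp add: vars_rename_atm image_Union)
  moreover have "map fresh_vars (map (subst_ctree \<rho> \<theta>) ts) = map (map ((`) \<rho>)) (map fresh_vars ts)"
    using CNode by (auto intro: inj_on_subset)
  ultimately show ?case by (simp only: subst_ctree.simps fresh_vars.simps map_concat list.map(2))
qed auto

lemma node_ok_subst_ctree:
  assumes ok: "node_ok a r ts" and inj: "inj_on \<rho> (rule_vars r)"
    and fixed: "\<forall>y\<in>\<Union> (set (map vars_atm (body r))) - vars_atm (head r). \<theta> (\<rho> y) = Var (\<rho> y)"
  shows "node_ok (subst_atm (\<lambda>x. \<theta> (\<rho> x)) a) (rename_rule \<rho> r) (map (subst_ctree \<rho> \<theta>) ts)"
proof -
  define \<eta> where "\<eta> = (\<lambda>x. \<theta> (\<rho> x))"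
  from ok obtain q Zs targs where h: "head r = Atm q (map Var Zs)" "a = Atm q targs"
    "length Zs = length targs"
    and c: "if body r = [] then ts = [TLeaf]
            else map label ts = map (\<lambda>s. Some (subst_atm (mk_subst Zs targs) s)) (body r)"
    unfolding node_ok_def by blast
  have hd: "head (rename_rule \<rho> r) = Atm q (map Var (map \<rho> Zs))"
    by (simp add: head_rename_rule h(1))
  have "subst_atm \<eta> (subst_atm (mk_subst Zs targs) s) =
        subst_atm (mk_subst (map \<rho> Zs) (map (subst_trm \<eta>) targs)) (subst_atm (Var \<circ> \<rho>) s)"
    if s: "s \<in> set (body r)" for s
  proof -
    have "inj_on \<rho> (set Zs \<union> vars_atm s)"
      by (rule inj_on_subset[OF inj]) (use s h(1) in \<open>auto simp: rule_vars_def\<close>)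
    moreover have "\<forall>y\<in>vars_atm s - set Zs. \<theta> (\<rho> y) = Var (\<rho> y)"
      using fixed s h(1) by auto
    ultimately show ?thesis
      unfolding \<eta>_def by (simp add: subst_atm_mk_subst_rename h(3))
  qed
  then have "map (map_option (subst_atm \<eta>)) (map (\<lambda>s. Some (subst_atm (mk_subst Zs targs) s)) (body r))
      = map (\<lambda>s. Some (subst_atm (mk_subst (map \<rho> Zs) (map (subst_trm \<eta>) targs)) s))
          (body (rename_rule \<rho> r))"
    by (simp add: body_rename_rule)
  moreover have "map label (map (subst_ctree \<rho> \<theta>) ts) = map (map_option (subst_atm \<eta>)) (map label ts)"
    by (simp add: label_subst_ctree \<eta>_def)
  ultimately have "body r \<noteq> [] \<Longrightarrow> map label (map (subst_ctree \<rho> \<theta>) ts) =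
      map (\<lambda>s. Some (subst_atm (mk_subst (map \<rho> Zs) (map (subst_trm \<eta>) targs)) s)) (body (rename_rule \<rho> r))"
    using c by simp
  then show ?thesis
    using c h(3) unfolding node_ok_def hd
    by (intro exI[of _ q] exI[of _ "map \<rho> Zs"] exI[of _ "map (subst_trm \<eta>) targs"])
       (auto simp: h(2) \<eta>_def body_rename_rule)
qed

lemma wf_tree_subst_ctree:
  assumes "wf_tree Cc Af Rf T" "inj_on \<rho> (tvars T)"
    and "\<forall>F\<in>set (fresh_vars T). \<forall>y\<in>F. \<theta> (\<rho> y) = Var (\<rho> y)"
    and "pred_closed Cc" "pred_closed Af"
  shows "wf_tree Cc Af Rf (subst_ctree \<rho> \<theta> T)"
  using assms
proof (induction T)
  case (CNode a r \<sigma> ts)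
  have inj: "inj_on \<rho> (rule_vars (rename_rule \<sigma> r))"
    using CNode.prems(2) by (auto intro: inj_on_subset)
  with CNode.prems(1) have "inj_on (\<rho> \<circ> \<sigma>) (rule_vars r)"
    by (simp add: rule_vars_rename_rule comp_inj_on)
  moreover have "node_ok (subst_atm (\<lambda>x. \<theta> (\<rho> x)) a) (rename_rule (\<rho> \<circ> \<sigma>) r) (map (subst_ctree \<rho> \<theta>) ts)"
    unfolding rename_rule_comp using CNode.prems(1,3) inj by (intro node_ok_subst_ctree) auto
  moreover have "wf_tree Cc Af Rf (subst_ctree \<rho> \<theta> t)" if "t \<in> set ts" for t
    using CNode.IH[OF that] CNode.prems that by (auto intro: inj_on_subset)
  ultimately show ?case using CNode.prems(1) by simp
qed (auto simp: subst_atm_in_pred_closed_iff)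

lemma node_ok_generalise:
  assumes ok: "node_ok (subst_atm \<theta> a') r ts" and "body r \<noteq> []"
    and fixed: "\<forall>y\<in>\<Union> (set (map vars_atm (body r))) - vars_atm (head r). \<theta> y = Var y"
  obtains ls where "map label ts = map (\<lambda>l. Some (subst_atm \<theta> l)) ls"
    "\<And>ts'. map label ts' = map Some ls \<Longrightarrow> node_ok a' r ts'"
proof -
  from ok assms(2) obtain q Zs targs where h: "head r = Atm q (map Var Zs)" "subst_atm \<theta> a' = Atm q targs"
    "length Zs = length targs"
    and c: "map label ts = map (\<lambda>s. Some (subst_atm (mk_subst Zs targs) s)) (body r)"
    unfolding node_ok_def by auto
  obtain targs' where a': "a' = Atm q targs'" and targs: "targs = map (subst_trm \<theta>) targs'"
    using h(2) by (cases a') auto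
  define ls where "ls = map (subst_atm (mk_subst Zs targs')) (body r)"
  show ?thesis
  proof (rule that)
    have "\<forall>s\<in>set (body r). \<forall>y\<in>vars_atm s - set Zs. \<theta> y = Var y"
      using fixed h(1) by auto
    then show "map label ts = map (\<lambda>l. Some (subst_atm \<theta> l)) ls"
      using c h(3) by (simp add: ls_def targs subst_atm_mk_subst_commute)
    show "node_ok a' r ts'" if "map label ts' = map Some ls" for ts'
      using that h(1,3) a' targs assms(2) unfolding node_ok_def by (auto simp: ls_def)
  qed
qed

lemma wf_tree_generalise:
  assumes "wf_tree Cc Af Rf T" "label T = Some (subst_atm \<theta> a')"
    and "\<forall>F\<in>set (fresh_vars T). \<forall>y\<in>F. \<theta> y = Var y"
    and "pred_closed Cc" "pred_closed Af"
  shows "\<exists>T'. wf_tree Cc Af Rf T' \<and> label T' = Some a' \<and> subst_ctree id \<theta> T' = T"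
  using assms
proof (induction T arbitrary: a')
  case (CLeaf a)
  then show ?case by (intro exI[of _ "CLeaf a'"]) (auto simp: subst_atm_in_pred_closed_iff)
next
  case (CNode a r \<sigma> ts)
  define r' where "r' = rename_rule \<sigma> r"
  have ok: "node_ok (subst_atm \<theta> a') r' ts"
    using CNode.prems(1,2) by (simp add: r'_def)
  show ?case
  proof (cases "body r' = []")
    case True
    then show ?thesis using CNode.prems(1,2) ok
      by (intro exI[of _ "CNode a' r \<sigma> ts"]) (cases a', auto simp: node_ok_def r'_def)
  next
    case False
    moreover have "\<forall>y\<in>\<Union> (set (map vars_atm (body r'))) - vars_atm (head r'). \<theta> y = Var y"
      using CNode.prems(3) by (simp add: r'_def)
    ultimately obtain ls where labels: "map label ts = map (\<lambda>l. Some (subst_atm \<theta> l)) ls"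
      and ok': "\<And>ts'. map label ts' = map Some ls \<Longrightarrow> node_ok a' r' ts'"
      using node_ok_generalise[OF ok] by blast
    then have len: "length ls = length ts" by (metis length_map)
    have "\<forall>i<length ts. \<exists>t'. wf_tree Cc Af Rf t' \<and> label t' = Some (ls ! i) \<and> subst_ctree id \<theta> t' = ts ! i"
    proof (intro allI impI)
      fix i assume i: "i < length ts"
      show "\<exists>t'. wf_tree Cc Af Rf t' \<and> label t' = Some (ls ! i) \<and> subst_ctree id \<theta> t' = ts ! i"
      proof (rule CNode.IH[OF nth_mem[OF i]])
        show "label (ts ! i) = Some (subst_atm \<theta> (ls ! i))"
          using arg_cong[OF labels, of "\<lambda>xs. xs ! i"] i len by simp
      qed (use CNode.prems nth_mem[OF i] in auto)
    qed
    then obtain ts' where ts': "length ts' = length ts"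
      "\<forall>i<length ts. wf_tree Cc Af Rf (ts' ! i) \<and> label (ts' ! i) = Some (ls ! i) \<and> subst_ctree id \<theta> (ts' ! i) = ts ! i"
      unfolding Skolem_list_nth by blast
    have "map label ts' = map Some ls" and children: "map (subst_ctree id \<theta>) ts' = ts"
      using ts' len by (auto intro: nth_equalityI)
    moreover have "\<forall>t\<in>set ts'. wf_tree Cc Af Rf t"
      using ts' by (auto simp: in_set_conv_nth)
    ultimately have "wf_tree Cc Af Rf (CNode a' r \<sigma> ts')"
      using CNode.prems(1) ok' by (simp add: r'_def)
    moreover have "subst_ctree id \<theta> (CNode a' r \<sigma> ts') = CNode a r \<sigma> ts"
      using children CNode.prems(2) by simp
    ultimately show ?thesis by (metis label.simps(3))
  qed
qed auto

lemma renamed_apart_disjoint_claim: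
  "renamed_apart s T \<Longrightarrow> F \<in> set (fresh_vars T) \<Longrightarrow> F \<inter> vars_atm s = {}"
  unfolding renamed_apart_def Let_def by (auto simp: in_set_conv_nth)

lemma renamed_apart_image:
  assumes "renamed_apart s T" "fresh_vars T' = map ((`) \<rho>) (fresh_vars T)"
    and "inj_on \<rho> (\<Union> (set (fresh_vars T)))"
    and "\<forall>F\<in>set (fresh_vars T). \<rho> ` F \<inter> vars_atm s' = {}"
  shows "renamed_apart s' T'"
  unfolding renamed_apart_def Let_def assms(2)
proof (intro conjI allI impI)
  fix i assume "i < length (map ((`) \<rho>) (fresh_vars T))"
  then show "map ((`) \<rho>) (fresh_vars T) ! i \<inter> vars_atm s' = {}"
    using assms(4) by simp
next
  fix i j assume ij: "i < length (map ((`) \<rho>) (fresh_vars T))"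
    "j < length (map ((`) \<rho>) (fresh_vars T))" "i \<noteq> j"
  then have "\<rho> ` (fresh_vars T ! i) \<inter> \<rho> ` (fresh_vars T ! j) = \<rho> ` (fresh_vars T ! i \<inter> fresh_vars T ! j)"
    by (intro inj_on_image_Int[OF assms(3), symmetric]) (auto dest: nth_mem)
  also have "\<dots> = {}"
    using assms(1) ij unfolding renamed_apart_def Let_def by simp
  finally show "map ((`) \<rho>) (fresh_vars T) ! i \<inter> map ((`) \<rho>) (fresh_vars T) ! j = {}"
    using ij by simp
qed

section \<open>Generalising and instantiating arguments\<close>

lemma tight_argI:
  assumes "s \<in> Lc - Cc" "wf_tree Cc Af Rf T" "label T = Some s" "renamed_apart s T"
    and "consistent CT (leaves T \<inter> Cc)"
  shows "tight_arg Lc Cc Rf CT Af (leaves T \<inter> Cc) (leaves T \<inter> Af) (rules_used T) s"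
  using assms rules_used_subset_if_wf_tree[OF assms(2)] unfolding tight_arg_def
  by (intro conjI exI[of _ T]) auto

lemma tight_argE:
  assumes "tight_arg Lc Cc Rf CT Af C A R s"
  obtains T where "s \<in> Lc - Cc" "consistent CT C" "wf_tree Cc Af Rf T" "label T = Some s"
    "renamed_apart s T" "C = leaves T \<inter> Cc" "A = leaves T \<inter> Af" "R = rules_used T"
  using assms that unfolding tight_arg_def by (elim conjE exE) simp

lemma obtain_most_general_tree:
  assumes inf: "infinite (UNIV :: 'v set)" and pcC: "pred_closed Cc" and pcA: "pred_closed Af"
    and T: "wf_tree Cc Af Rf T" "label T = Some (Atm p ts)" "renamed_apart (Atm p ts) T"
  obtains Xs :: "'v list" and T' where "distinct Xs" "length Xs = length ts"
    "wf_tree Cc Af Rf T'" "label T' = Some (Atm p (map Var Xs))"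
    "renamed_apart (Atm p (map Var Xs)) T'"
    "leaves T = subst_atm (mk_subst Xs ts) ` leaves T'" "rules_used T' = rules_used T"
    "\<forall>l\<in>leaves T'. (vars_atm l - set Xs) \<inter> \<Union> (set (map vars_trm ts)) = {}"
proof -
  let ?VT = "\<Union> (set (map vars_trm ts))"
  obtain Xs where Xs: "distinct Xs" "length Xs = length ts" "set Xs \<inter> (tvars T \<union> ?VT) = {}"
    using ex_distinct_list_disjoint[OF inf, of "tvars T \<union> ?VT" "length ts"] by auto
  define \<theta> where "\<theta> = mk_subst Xs ts"
  have "label T = Some (subst_atm \<theta> (Atm p (map Var Xs)))"
    unfolding \<theta>_def subst_atm_mk_subst_Vars[OF Xs(1,2)] by (rule T(2))
  moreover have "\<forall>F\<in>set (fresh_vars T). \<forall>y\<in>F. \<theta> y = Var y"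
    using fresh_vars_subset_tvars Xs(3) by (fastforce simp: \<theta>_def intro: mk_subst_notin)
  ultimately obtain T' where T': "wf_tree Cc Af Rf T'" "label T' = Some (Atm p (map Var Xs))"
    "subst_ctree id \<theta> T' = T"
    using wf_tree_generalise[OF T(1) _ _ pcC pcA] by metis
  have fresh: "fresh_vars T' = fresh_vars T"
    using fresh_vars_subst_ctree[of id T' \<theta>] T'(3) by simp
  show ?thesis
  proof (rule that[OF Xs(1,2) T'(1,2)])
    show "renamed_apart (Atm p (map Var Xs)) T'"
      by (rule renamed_apart_image[OF T(3), of _ id]) (use fresh fresh_vars_subset_tvars Xs(3) in auto)
    show "leaves T = subst_atm (mk_subst Xs ts) ` leaves T'"
      using leaves_subst_ctree[of id \<theta> T'] T'(3) by (simp add: \<theta>_def)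
    show "rules_used T' = rules_used T"
      using rules_used_subst_ctree[of id \<theta> T'] T'(3) by simp
    have "F \<inter> ?VT = {}" if "F \<in> set (fresh_vars T)" for F
      using renamed_apart_disjoint_claim[OF T(3) that] by simp
    then show "\<forall>l\<in>leaves T'. (vars_atm l - set Xs) \<inter> ?VT = {}"
      using vars_leaves_subset[OF T'(1,2)] fresh by fastforce
  qed
qed

lemma obtain_instance_tree:
  fixes \<theta> :: "'v \<Rightarrow> ('f, 'v) trm"
  assumes inf: "infinite (UNIV :: 'v set)" and pcC: "pred_closed Cc" and pcA: "pred_closed Af"
    and T': "wf_tree Cc Af Rf T'" "label T' = Some s'" "renamed_apart s' T'"
    and id_out: "\<And>x. x \<notin> vars_atm s' \<Longrightarrow> \<theta> x = Var x"
    and leaves_disj: "\<forall>l\<in>leaves T'. (vars_atm l - vars_atm s') \<inter> vars_atm (subst_atm \<theta> s') = {}"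
  obtains T where "wf_tree Cc Af Rf T" "label T = Some (subst_atm \<theta> s')"
    "renamed_apart (subst_atm \<theta> s') T" "leaves T = subst_atm \<theta> ` leaves T'" "rules_used T = rules_used T'"
proof -
  let ?V = "vars_atm (subst_atm \<theta> s')"
  let ?FT = "\<Union> (set (fresh_vars T'))"
  have FT_s': "?FT \<inter> vars_atm s' = {}"
    using renamed_apart_disjoint_claim[OF T'(3)] by auto
  have FT_tvars: "?FT \<subseteq> tvars T'"
    using fresh_vars_subset_tvars by blast
  \<comment> \<open>Fresh variables of \<open>T'\<close> occurring in \<open>?V\<close> would be captured by \<open>\<theta>\<close>; \<open>\<rho>\<close> renames exactly these apart.\<close>
  obtain \<rho> :: "'v \<Rightarrow> 'v" where \<rho>: "inj_on \<rho> (tvars T' \<union> ?V)" "\<And>x. x \<notin> ?FT \<inter> ?V \<Longrightarrow> \<rho> x = x"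
    "\<rho> ` (?FT \<inter> ?V) \<inter> (tvars T' \<union> ?V) = {}"
    using obtain_renaming_away[OF inf, where W = "tvars T' \<union> ?V" and S = "?FT \<inter> ?V"] FT_tvars by auto
  have \<rho>_fresh: "\<rho> y \<notin> vars_atm s' \<union> ?V" if "y \<in> ?FT" for y
    using that \<rho>(2,3) FT_s' vars_label_subset_tvars[OF T'(2)] by (cases "y \<in> ?V") auto
  have inj: "inj_on \<rho> (tvars T')"
    using \<rho>(1) by (rule inj_on_subset) auto
  have \<rho>_fixes: "subst_atm (\<lambda>x. \<theta> (\<rho> x)) l = subst_atm \<theta> l"
    if "vars_atm l - vars_atm s' \<subseteq> - ?V" for l
  proof (rule subst_atm_cong)
    fix x assume "x \<in> vars_atm l"
    with that FT_s' have "x \<notin> ?FT \<inter> ?V" by blast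
    then show "\<theta> (\<rho> x) = \<theta> x" using \<rho>(2) by simp
  qed
  define T where "T = subst_ctree \<rho> \<theta> T'"
  show ?thesis
  proof (rule that)
    show "wf_tree Cc Af Rf T"
      unfolding T_def using \<rho>_fresh id_out by (intro wf_tree_subst_ctree[OF T'(1) inj _ pcC pcA]) blast
    have "subst_atm (\<lambda>x. \<theta> (\<rho> x)) s' = subst_atm \<theta> s'"
      by (rule \<rho>_fixes) blast
    then show "label T = Some (subst_atm \<theta> s')"
      unfolding T_def label_subst_ctree T'(2) by simp
    show "renamed_apart (subst_atm \<theta> s') T"
      unfolding T_def using \<rho>_fresh
      by (intro renamed_apart_image[OF T'(3) fresh_vars_subst_ctree[OF inj] inj_on_subset[OF inj FT_tvars]])
         auto
    show "leaves T = subst_atm \<theta> ` leaves T'"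
      unfolding T_def leaves_subst_ctree using \<rho>_fixes leaves_disj by (auto intro!: image_cong)
    show "rules_used T = rules_used T'"
      by (simp add: T_def rules_used_subst_ctree)
  qed
qed

lemma tight_arg_generalise:
  assumes inf: "infinite (UNIV :: 'v set)"
    and pcL: "pred_closed Lc" and pcC: "pred_closed Cc" and pcA: "pred_closed Af"
    and tight: "tight_arg Lc Cc Rf CT Af C A R (Atm p ts)"
  obtains Xs :: "'v list" and C' A' where "mg_arg Lc Cc Rf CT Af C' A' R (Atm p (map Var Xs))"
    "length Xs = length ts"
    "(\<Union> (vars_atm ` (C' \<union> A')) - set Xs) \<inter> \<Union> (set (map vars_trm ts)) = {}"
    "C = subst_atm (mk_subst Xs ts) ` C'" "A = subst_atm (mk_subst Xs ts) ` A'"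
proof -
  from tight obtain T where T: "Atm p ts \<in> Lc - Cc" "consistent CT C" "wf_tree Cc Af Rf T"
    "label T = Some (Atm p ts)" "renamed_apart (Atm p ts) T"
    "C = leaves T \<inter> Cc" "A = leaves T \<inter> Af" "R = rules_used T"
    by (rule tight_argE)
  obtain Xs T' where Xs: "distinct Xs" "length Xs = length ts"
    and T': "wf_tree Cc Af Rf T'" "label T' = Some (Atm p (map Var Xs))"
      "renamed_apart (Atm p (map Var Xs)) T'"
      "leaves T = subst_atm (mk_subst Xs ts) ` leaves T'" "rules_used T' = rules_used T"
      "\<forall>l\<in>leaves T'. (vars_atm l - set Xs) \<inter> \<Union> (set (map vars_trm ts)) = {}"
    by (rule obtain_most_general_tree[OF inf pcC pcA T(3-5)])
  define C' where "C' = leaves T' \<inter> Cc"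
  define A' where "A' = leaves T' \<inter> Af"
  have C: "C = subst_atm (mk_subst Xs ts) ` C'" and A: "A = subst_atm (mk_subst Xs ts) ` A'"
    unfolding T(6,7) T'(4) C'_def A'_def by (simp_all add: image_subst_atm_Int_pred_closed pcC pcA)
  have "Atm p (map Var Xs) \<in> Lc - Cc"
    using T(1) unfolding subst_atm_mk_subst_Vars[OF Xs, of p, symmetric]
    by (simp add: subst_atm_in_pred_closed_iff pcL pcC del: subst_atm.simps)
  moreover have "consistent CT C'"
    using T(2) C by (auto simp: C'_def intro: consistent_subst_atm_imageD)
  ultimately have "mg_arg Lc Cc Rf CT Af C' A' R (Atm p (map Var Xs))"
    unfolding mg_arg_def C'_def A'_def using tight_argI[OF _ T'(1-3)] T'(5) T(8) Xs(1) by auto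
  moreover have "(\<Union> (vars_atm ` (C' \<union> A')) - set Xs) \<inter> \<Union> (set (map vars_trm ts)) = {}"
    using T'(6) by (auto simp: C'_def A'_def)
  ultimately show ?thesis using that Xs(2) C A by blast
qed

lemma mg_arg_instantiate:
  fixes Xs :: "'v list"
  assumes inf: "infinite (UNIV :: 'v set)"
    and pcL: "pred_closed Lc" and pcC: "pred_closed Cc" and pcA: "pred_closed Af"
    and mg: "mg_arg Lc Cc Rf CT Af C' A' R (Atm p (map Var Xs))"
    and len: "length Xs = length ts"
    and disj: "(\<Union> (vars_atm ` (C' \<union> A')) - set Xs) \<inter> \<Union> (set (map vars_trm ts)) = {}"
    and cons: "consistent CT (subst_atm (mk_subst Xs ts) ` C')"
  shows "tight_arg Lc Cc Rf CT Af (subst_atm (mk_subst Xs ts) ` C') (subst_atm (mk_subst Xs ts) ` A') R (Atm p ts)"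
proof -
  from mg obtain T' where T': "Atm p (map Var Xs) \<in> Lc - Cc" "wf_tree Cc Af Rf T'"
    "label T' = Some (Atm p (map Var Xs))" "renamed_apart (Atm p (map Var Xs)) T'"
    "C' = leaves T' \<inter> Cc" "A' = leaves T' \<inter> Af" "R = rules_used T'"
    unfolding mg_arg_def by (auto elim: tight_argE)
  from mg have "distinct Xs"
    unfolding mg_arg_def by (auto dest: inj_map_eq_map[THEN iffD1, rotated] simp: inj_def)
  then have claim: "subst_atm (mk_subst Xs ts) (Atm p (map Var Xs)) = Atm p ts"
    using len by (rule subst_atm_mk_subst_Vars)
  have leaves_disj: "\<forall>l\<in>leaves T'. (vars_atm l - vars_atm (Atm p (map Var Xs))) \<inter>
      vars_atm (subst_atm (mk_subst Xs ts) (Atm p (map Var Xs))) = {}"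
    unfolding claim using disj leaves_subset_if_wf_tree[OF T'(2)] T'(5,6) by auto
  obtain T where T: "wf_tree Cc Af Rf T" "label T = Some (Atm p ts)" "renamed_apart (Atm p ts) T"
    "leaves T = subst_atm (mk_subst Xs ts) ` leaves T'" "rules_used T = rules_used T'"
    by (rule obtain_instance_tree[OF inf pcC pcA T'(2-4) _ leaves_disj, unfolded claim])
       (simp add: mk_subst_notin)
  have "Atm p ts \<in> Lc - Cc"
    using T'(1) unfolding claim[symmetric]
    by (simp add: subst_atm_in_pred_closed_iff pcL pcC del: subst_atm.simps)
  moreover have "leaves T \<inter> Cc = subst_atm (mk_subst Xs ts) ` C'"
    and "leaves T \<inter> Af = subst_atm (mk_subst Xs ts) ` A'"
    unfolding T(4) T'(5,6) by (simp_all add: image_subst_atm_Int_pred_closed pcC pcA)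
  ultimately show ?thesis
    using tight_argI[OF _ T(1-3)] cons T(5) T'(7) by auto
qed

theorem proposition5p7:
  fixes Lc Cc :: "('p, 'f, 'v) atm set" and Rf :: "('p, 'f, 'v) rule set"
    and CT :: "('d, 'f, 'p) struct set" and Af :: "('p, 'f, 'v) atm set"
    and ctr :: "('p, 'f, 'v) atm \<Rightarrow> ('p, 'f, 'v) atm" and eqp :: 'p
    and C A :: "('p, 'f, 'v) atm set" and R :: "('p, 'f, 'v) rule set"
    and p :: 'p and ts :: "('f, 'v) trm list"
  assumes "caba_framework Lc Cc Rf CT Af ctr eqp"
  shows "tight_arg Lc Cc Rf CT Af C A R (Atm p ts) \<longleftrightarrow>
    (\<exists>Xs C' A'. mg_arg Lc Cc Rf CT Af C' A' R (Atm p (map Var Xs)) \<and>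
       length Xs = length ts \<and>
       (\<Union> (vars_atm ` (C' \<union> A')) - set Xs) \<inter> \<Union> (set (map vars_trm ts)) = {} \<and>
       C = subst_atm (mk_subst Xs ts) ` C' \<and>
       A = subst_atm (mk_subst Xs ts) ` A' \<and>
       consistent CT (subst_atm (mk_subst Xs ts) ` C'))"
proof -
  from assms have inf: "infinite (UNIV :: 'v set)"
    and pc: "pred_closed Lc" "pred_closed Cc" "pred_closed Af"
    unfolding caba_framework_def by auto
  have "consistent CT C" if "tight_arg Lc Cc Rf CT Af C A R (Atm p ts)"
    using that by (rule tight_argE)
  then show ?thesis
    using tight_arg_generalise[OF inf pc] mg_arg_instantiate[OF inf pc]
    by metis
qed

end
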